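(* Consider a Why Query with the \texttt{SUM} aggregate, an attribute $X$ with filters $p_1,\dots,p_m$, a threshold $\varepsilon$ and a conciseness parameter $\sigma>0$. If $P^*\subseteq\{p_1,\dots,p_m\}$ is an optimal explanation, i.e. $P^*$ maximizes $\rho_P-\sigma|P|$ over all $P\subseteq\{p_1,\dots,p_m\}$, then $\Delta(D_p)>0$ for every $p\in P^*$.
   Context: $D$ is a finite table of rows; $M$ is a numerical column; $s_1,s_2$ are two disjoint sets of rows (sibling subspaces). $X$ is a categorical column with values $x_1,\dots,x_m$; filter $p_i$ is the condition $X=x_i$. A predicate is a set $P\subseteq\{p_1,\dots,p_m\}$ and $D_P$ is the set of rows whose $X$-value belongs to $P$; $|P|$ is the number of filters in $P$; $D'-D''$ denotes set difference of rows. For $D'\subseteq D$, $\Delta(D')=\sum_{t\in D'\cap s_1}t[M]-\sum_{t\in D'\cap s_2}t[M]$. It is assumed $\Delta(D)>0$. W-causality: $P$ is an actual cause if there exists $\Gamma\subseteq\{p_1,\dots,p_m\}$ with $\Gamma\cap P=\emptyset$ (a valid contingency) such that $\Delta(D-D_\Gamma-D_P)\le\varepsilon<\Delta(D-D_\Gamma)$. W-responsibility: for an actual cause $P$, $\rho_P=\frac{1}{1+\min_\Gamma|\Gamma|_W}$ where $\Gamma$ ranges over valid contingencies for $P$ and $|\Gamma|_W=\max\left(\frac{\Delta(D-D_P)-\Delta(D-D_P-D_\Gamma)}{\Delta(D)},0\right)$; $\rho_P=0$ if $P$ is not an actual cause. *)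

theory Defs
  imports Complex_Main
begin

text \<open>Rows have type 'r; the numerical column M is a function 'r => real; the
categorical column X is a function 'r => 'v.  The filter p_i (X = x_i) is identified
with the value x_i, so a predicate is a set of values P \<subseteq> V, where V = {x_1,...,x_m}.\<close>

definition Delta :: "'r set \<Rightarrow> 'r set \<Rightarrow> ('r \<Rightarrow> real) \<Rightarrow> 'r set \<Rightarrow> real" where
  "Delta s1 s2 M D' = (\<Sum>t\<in>D' \<inter> s1. M t) - (\<Sum>t\<in>D' \<inter> s2. M t)"

definition rows_sel :: "'r set \<Rightarrow> ('r \<Rightarrow> 'v) \<Rightarrow> 'v set \<Rightarrow> 'r set" where
  "rows_sel D X P = {t \<in> D. X t \<in> P}"

definition valid_contingency ::
  "'r set \<Rightarrow> ('r \<Rightarrow> 'v) \<Rightarrow> 'v set \<Rightarrow> 'r set \<Rightarrow> 'r set \<Rightarrow> ('r \<Rightarrow> real) \<Rightarrow> real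
   \<Rightarrow> 'v set \<Rightarrow> 'v set \<Rightarrow> bool" where
  "valid_contingency D X V s1 s2 M eps P \<Gamma> \<longleftrightarrow>
     \<Gamma> \<subseteq> V \<and> \<Gamma> \<inter> P = {} \<and>
     Delta s1 s2 M (D - rows_sel D X \<Gamma> - rows_sel D X P) \<le> eps \<and>
     eps < Delta s1 s2 M (D - rows_sel D X \<Gamma>)"

definition actual_cause ::
  "'r set \<Rightarrow> ('r \<Rightarrow> 'v) \<Rightarrow> 'v set \<Rightarrow> 'r set \<Rightarrow> 'r set \<Rightarrow> ('r \<Rightarrow> real) \<Rightarrow> real
   \<Rightarrow> 'v set \<Rightarrow> bool" where
  "actual_cause D X V s1 s2 M eps P \<longleftrightarrow> (\<exists>\<Gamma>. valid_contingency D X V s1 s2 M eps P \<Gamma>)"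

definition W_size ::
  "'r set \<Rightarrow> ('r \<Rightarrow> 'v) \<Rightarrow> 'r set \<Rightarrow> 'r set \<Rightarrow> ('r \<Rightarrow> real) \<Rightarrow> 'v set \<Rightarrow> 'v set \<Rightarrow> real" where
  "W_size D X s1 s2 M P \<Gamma> =
     max ((Delta s1 s2 M (D - rows_sel D X P)
           - Delta s1 s2 M (D - rows_sel D X P - rows_sel D X \<Gamma>)) / Delta s1 s2 M D) 0"

definition W_resp ::
  "'r set \<Rightarrow> ('r \<Rightarrow> 'v) \<Rightarrow> 'v set \<Rightarrow> 'r set \<Rightarrow> 'r set \<Rightarrow> ('r \<Rightarrow> real) \<Rightarrow> real
   \<Rightarrow> 'v set \<Rightarrow> real" where
  "W_resp D X V s1 s2 M eps P =
     (if actual_cause D X V s1 s2 M eps P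
      then 1 / (1 + Min (W_size D X s1 s2 M P ` {\<Gamma>. valid_contingency D X V s1 s2 M eps P \<Gamma>}))
      else 0)"

end

theory Submission
  imports Defs
begin

text \<open>Suppose some p \<in> P* had \<Delta>(D_p) \<le> 0. Deleting rows with non-positive contribution
can only lower \<Delta>, so every valid contingency \<Gamma> for P* stays valid for P* - {p}. Since
\<Gamma> is disjoint from both predicates, its weighted size is max(\<Delta>(D_\<Gamma>)/\<Delta>(D), 0) in either
case, so the minimal contingency size does not grow and \<rho> does not drop. Hence
P* - {p} gains at least \<sigma> > 0 in the objective, contradicting optimality of P*.\<close>

lemma Delta_eq_Diff_plus_Int:
  assumes "finite A"
  shows "Delta s1 s2 M A = Delta s1 s2 M (A - B) + Delta s1 s2 M (A \<inter> B)"
proof -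
  have "A \<inter> s = (A - B) \<inter> s \<union> (A \<inter> B) \<inter> s" "(A - B) \<inter> s \<inter> ((A \<inter> B) \<inter> s) = {}" for s
    by auto
  then have "(\<Sum>t\<in>A \<inter> s. M t) = (\<Sum>t\<in>(A - B) \<inter> s. M t) + (\<Sum>t\<in>(A \<inter> B) \<inter> s. M t)" for s
    using assms by (metis finite_Int finite_Diff sum.union_disjoint)
  then show ?thesis
    unfolding Delta_def by simp
qed

lemma W_size_nonneg: "W_size D X s1 s2 M P \<Gamma> \<ge> 0"
  unfolding W_size_def by simp

lemma W_size_disjoint:
  assumes "finite D" and "\<Gamma> \<inter> P = {}"
  shows "W_size D X s1 s2 M P \<Gamma> = max (Delta s1 s2 M (rows_sel D X \<Gamma>) / Delta s1 s2 M D) 0"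
proof -
  have "(D - rows_sel D X P) \<inter> rows_sel D X \<Gamma> = rows_sel D X \<Gamma>"
    using assms(2) unfolding rows_sel_def by auto
  then show ?thesis
    unfolding W_size_def
    using Delta_eq_Diff_plus_Int[of "D - rows_sel D X P" s1 s2 M "rows_sel D X \<Gamma>"] assms(1)
    by simp
qed

lemma finite_valid_contingencies:
  assumes "finite V"
  shows "finite {\<Gamma>. valid_contingency D X V s1 s2 M eps P \<Gamma>}"
  by (rule finite_subset[of _ "Pow V"]) (auto simp: valid_contingency_def assms)

lemma valid_contingency_remove_nonpos:
  assumes "finite D" and "Q \<subseteq> P"
    and nonpos: "Delta s1 s2 M (rows_sel D X (P - Q)) \<le> 0"
    and valid: "valid_contingency D X V s1 s2 M eps P \<Gamma>"
  shows "valid_contingency D X V s1 s2 M eps Q \<Gamma>"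
proof -
  define A where "A = D - rows_sel D X \<Gamma> - rows_sel D X Q"
  have disj: "\<Gamma> \<inter> P = {}"
    using valid unfolding valid_contingency_def by simp
  have "A - rows_sel D X (P - Q) = D - rows_sel D X \<Gamma> - rows_sel D X P"
    using \<open>Q \<subseteq> P\<close> unfolding A_def rows_sel_def by auto
  moreover have "A \<inter> rows_sel D X (P - Q) = rows_sel D X (P - Q)"
    using disj unfolding A_def rows_sel_def by auto
  ultimately have "Delta s1 s2 M A \<le> Delta s1 s2 M (D - rows_sel D X \<Gamma> - rows_sel D X P)"
    using Delta_eq_Diff_plus_Int[of A s1 s2 M "rows_sel D X (P - Q)"] nonpos \<open>finite D\<close>
    unfolding A_def by simp
  then show ?thesis
    using valid disj \<open>Q \<subseteq> P\<close> unfolding valid_contingency_def A_def by auto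
qed

lemma W_resp_nonneg:
  assumes "finite V"
  shows "W_resp D X V s1 s2 M eps P \<ge> 0"
proof (cases "actual_cause D X V s1 s2 M eps P")
  case True
  let ?S = "W_size D X s1 s2 M P ` {\<Gamma>. valid_contingency D X V s1 s2 M eps P \<Gamma>}"
  have "finite ?S"
    using finite_valid_contingencies[OF assms] by (rule finite_imageI)
  moreover have "?S \<noteq> {}"
    using True unfolding actual_cause_def by auto
  ultimately have "Min ?S \<ge> 0"
    using W_size_nonneg by auto
  then show ?thesis
    using True by (simp add: W_resp_def)
qed (simp add: W_resp_def)

lemma W_resp_remove_nonpos:
  assumes "finite D" and "finite V" and "Q \<subseteq> P"
    and nonpos: "Delta s1 s2 M (rows_sel D X (P - Q)) \<le> 0"
  shows "W_resp D X V s1 s2 M eps P \<le> W_resp D X V s1 s2 M eps Q"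
proof (cases "actual_cause D X V s1 s2 M eps P")
  case False
  then have "W_resp D X V s1 s2 M eps P = 0"
    by (simp add: W_resp_def)
  then show ?thesis
    using W_resp_nonneg[OF assms(2)] by simp
next
  case True
  then obtain \<Gamma>\<^sub>0 where \<Gamma>\<^sub>0: "valid_contingency D X V s1 s2 M eps P \<Gamma>\<^sub>0"
    unfolding actual_cause_def by auto
  note remove = valid_contingency_remove_nonpos[OF assms(1,3) nonpos]
  have cause_Q: "actual_cause D X V s1 s2 M eps Q"
    using remove[OF \<Gamma>\<^sub>0] unfolding actual_cause_def by auto
  let ?S = "W_size D X s1 s2 M P ` {\<Gamma>. valid_contingency D X V s1 s2 M eps P \<Gamma>}"
  let ?S' = "W_size D X s1 s2 M Q ` {\<Gamma>. valid_contingency D X V s1 s2 M eps Q \<Gamma>}"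
  have "?S \<subseteq> ?S'"
  proof
    fix y assume "y \<in> ?S"
    then obtain \<Gamma> where \<Gamma>: "valid_contingency D X V s1 s2 M eps P \<Gamma>"
      and y: "y = W_size D X s1 s2 M P \<Gamma>" by auto
    have "\<Gamma> \<inter> P = {}" "\<Gamma> \<inter> Q = {}"
      using \<Gamma> \<open>Q \<subseteq> P\<close> unfolding valid_contingency_def by auto
    then have "y = W_size D X s1 s2 M Q \<Gamma>"
      using y W_size_disjoint[OF assms(1)] by metis
    then show "y \<in> ?S'"
      using remove[OF \<Gamma>] by blast
  qed
  have "?S \<noteq> {}"
    using \<Gamma>\<^sub>0 by auto
  have "finite ?S'"
    using finite_valid_contingencies[OF assms(2)] by (rule finite_imageI)
  have "Min ?S' \<le> Min ?S"
    using Min_antimono[OF \<open>?S \<subseteq> ?S'\<close> \<open>?S \<noteq> {}\<close> \<open>finite ?S'\<close>] .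
  moreover have "Min ?S' \<ge> 0"
  proof -
    have "?S' \<noteq> {}"
      using \<open>?S \<subseteq> ?S'\<close> \<open>?S \<noteq> {}\<close> by blast
    then show ?thesis
      using \<open>finite ?S'\<close> by (simp add: Min_ge_iff W_size_nonneg)
  qed
  ultimately have "1 / (1 + Min ?S) \<le> 1 / (1 + Min ?S')"
    by (simp add: frac_le)
  then show ?thesis
    unfolding W_resp_def using True cause_Q by simp
qed

theorem proposition3p14:
  fixes D s1 s2 :: "'r set" and M :: "'r \<Rightarrow> real" and X :: "'r \<Rightarrow> 'v"
    and V :: "'v set" and eps sigma :: real and Pstar :: "'v set"
  assumes "finite D"
    and "finite V"
    and "\<forall>t\<in>D. X t \<in> V"
    and "s1 \<inter> s2 = {}"
    and "Delta s1 s2 M D > 0"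
    and "sigma > 0"
    and "Pstar \<subseteq> V"
    and "\<forall>P. P \<subseteq> V \<longrightarrow>
           W_resp D X V s1 s2 M eps P - sigma * real (card P)
             \<le> W_resp D X V s1 s2 M eps Pstar - sigma * real (card Pstar)"
  shows "\<forall>p\<in>Pstar. Delta s1 s2 M (rows_sel D X {p}) > 0"
proof (rule ccontr)
  assume "\<not> ?thesis"
  then obtain p where "p \<in> Pstar" and nonpos: "Delta s1 s2 M (rows_sel D X {p}) \<le> 0"
    by (auto simp: not_less)
  define Q where "Q = Pstar - {p}"
  have "Q \<subseteq> Pstar" "Pstar - Q = {p}"
    using \<open>p \<in> Pstar\<close> unfolding Q_def by auto
  have "finite Pstar"
    using assms(2,7) by (rule finite_subset[rotated])
  then have "card Pstar = Suc (card Q)"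
    using card_Suc_Diff1[OF _ \<open>p \<in> Pstar\<close>] unfolding Q_def by simp
  have "W_resp D X V s1 s2 M eps Pstar \<le> W_resp D X V s1 s2 M eps Q"
    using W_resp_remove_nonpos[OF assms(1,2) \<open>Q \<subseteq> Pstar\<close>] nonpos
    unfolding \<open>Pstar - Q = {p}\<close> .
  moreover have "W_resp D X V s1 s2 M eps Q - sigma * real (card Q)
      \<le> W_resp D X V s1 s2 M eps Pstar - sigma * real (card Pstar)"
    using assms(7,8) \<open>Q \<subseteq> Pstar\<close> by blast
  ultimately show False
    using \<open>card Pstar = Suc (card Q)\<close> \<open>sigma > 0\<close> by (simp add: algebra_simps)
qed

end
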